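(* Let $P$ be a positive event pattern, $I$ an event stream, and $G=(V,\mathcal{E})$ the GRETA graph of $P$ and $I$. For $e \in V$ let $Pr(e)=\{p \in V : (p,e)\in\mathcal{E}\}$ be its predecessor events, and define $e.count$ recursively in order of increasing time by $$e.count = [\,e.type = start(P)\,] + \sum_{p \in Pr(e)} p.count,$$ where $[\cdot]$ is $1$ if the condition holds and $0$ otherwise. Then (1) for every $e \in V$, $e.count$ equals the number of directed paths in $G$ (including the one-vertex path) that start at a vertex of type $start(P)$ and end at $e$; and (2) $final\_count := \sum_{e \in V,\ e.type = end(P)} e.count$ equals the number of directed paths in $G$ from a vertex of type $start(P)$ to a vertex of type $end(P)$, i.e., the number of trends captured by $G$.
   Context: Events: each event $e$ has an event type $e.type$ and an occurrence time $e.time \in \mathbb{Q}_{\ge 0}$. An event stream $I$ is a finite collection of distinct events arriving in nondecreasing order of time. Positive patterns: an event type $E$ is a pattern; if $P_i,P_j$ are patterns then $P_i+$ and $\mathsf{SEQ}(P_i,P_j)$ are patterns; each event type occurs at most once in a pattern. Matches over $I$: $matches(E)=\{(e): e\in I, e.type=E\}$; $(e_1,\dots,e_k)\in matches(\mathsf{SEQ}(P_i,P_j))$ iff for some $1\le m\le k$, $(e_1,\dots,e_m)\in matches(P_i)$, $(e_{m+1},\dots,e_k)\in matches(P_j)$ and $e_1.time<\dots<e_k.time$; $matches(P_i+)$ consists of concatenations $s_1\cdots s_k$ ($k\ge1$) with each $s_l\in matches(P_i)$ and the last event of $s_l$ strictly earlier than the first event of $s_{l+1}$. Trends matched by $P$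 in $I$ are the elements of $matches(P)$. Define $start(E)=end(E)=E$, $start(P_i+)=start(P_i)$, $end(P_i+)=end(P_i)$, $start(\mathsf{SEQ}(P_i,P_j))=start(P_i)$, $end(\mathsf{SEQ}(P_i,P_j))=end(P_j)$. The GRETA graph $G=(V,\mathcal{E})$ has as vertices the events of $I$ occurring in at least one trend matched by $P$ in $I$, and an edge $(e_i,e_j)$ iff $e_i,e_j$ are consecutive events, in this order, in some trend matched by $P$ in $I$ (so every edge goes strictly forward in time and $G$ is acyclic). *)

theory Defs
  imports Complex_Main
begin

datatype 't pat = EType 't | PlusP "'t pat" | SeqP "'t pat" "'t pat"

fun pat_types :: "'t pat \<Rightarrow> 't list" where
  "pat_types (EType E) = [E]"
| "pat_types (PlusP P) = pat_types P"
| "pat_types (SeqP P Q) = pat_types P @ pat_types Q"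

definition wf_pat :: "'t pat \<Rightarrow> bool" where
  "wf_pat P \<longleftrightarrow> distinct (pat_types P)"

fun pstart :: "'t pat \<Rightarrow> 't" where
  "pstart (EType E) = E"
| "pstart (PlusP P) = pstart P"
| "pstart (SeqP P Q) = pstart P"

fun pend :: "'t pat \<Rightarrow> 't" where
  "pend (EType E) = E"
| "pend (PlusP P) = pend P"
| "pend (SeqP P Q) = pend Q"

text \<open>Events are abstract objects of type 'e with a type (etype) and an occurrence time (time).
  A stream is a finite set I of (distinct) events.  Trends are lists of events.\<close>
definition strictly_timed :: "('e \<Rightarrow> rat) \<Rightarrow> 'e list \<Rightarrow> bool" where
  "strictly_timed time xs \<longleftrightarrow> sorted_wrt (\<lambda>a b. time a < time b) xs"

inductive is_match :: "('e \<Rightarrow> 't) \<Rightarrow> ('e \<Rightarrow> rat) \<Rightarrow> 'e set \<Rightarrow> 't pat \<Rightarrow> 'e list \<Rightarrow> bool"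
  for etype time I where
  m_type: "e \<in> I \<Longrightarrow> etype e = E \<Longrightarrow> is_match etype time I (EType E) [e]"
| m_seq: "is_match etype time I P xs \<Longrightarrow> is_match etype time I Q ys \<Longrightarrow>
          strictly_timed time (xs @ ys) \<Longrightarrow> is_match etype time I (SeqP P Q) (xs @ ys)"
| m_plus1: "is_match etype time I P xs \<Longrightarrow> is_match etype time I (PlusP P) xs"
| m_plus2: "is_match etype time I (PlusP P) xs \<Longrightarrow> is_match etype time I P ys \<Longrightarrow>
          time (last xs) < time (hd ys) \<Longrightarrow> is_match etype time I (PlusP P) (xs @ ys)"

definition matches :: "('e \<Rightarrow> 't) \<Rightarrow> ('e \<Rightarrow> rat) \<Rightarrow> 'e set \<Rightarrow> 't pat \<Rightarrow> 'e list set" where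
  "matches etype time I P = {xs. is_match etype time I P xs}"

definition greta_V :: "('e \<Rightarrow> 't) \<Rightarrow> ('e \<Rightarrow> rat) \<Rightarrow> 'e set \<Rightarrow> 't pat \<Rightarrow> 'e set" where
  "greta_V etype time I P = {e. \<exists>tr \<in> matches etype time I P. e \<in> set tr}"

definition greta_E :: "('e \<Rightarrow> 't) \<Rightarrow> ('e \<Rightarrow> rat) \<Rightarrow> 'e set \<Rightarrow> 't pat \<Rightarrow> ('e \<times> 'e) set" where
  "greta_E etype time I P = {(a, b). \<exists>tr \<in> matches etype time I P.
      \<exists>i. Suc i < length tr \<and> tr ! i = a \<and> tr ! Suc i = b}"

definition is_path :: "'e set \<Rightarrow> ('e \<times> 'e) set \<Rightarrow> 'e list \<Rightarrow> bool" where
  "is_path V E xs \<longleftrightarrow> xs \<noteq> [] \<and> set xs \<subseteq> V \<and>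
     (\<forall>i. Suc i < length xs \<longrightarrow> (xs ! i, xs ! Suc i) \<in> E)"

end

theory Submission
  imports Defs
begin

text \<open>A path from a start vertex to \<open>e\<close> is either \<open>[e]\<close> or a path to a predecessor \<open>p\<close> of \<open>e\<close>
  extended by \<open>e\<close>, and these alternatives are disjoint; so the path counts satisfy the same
  recursion as \<open>count\<close>. Every GRETA edge goes strictly forward in time, so paths are distinct
  lists over the finite vertex set (hence finitely many) and the recursion is well-founded:
  induction in order of increasing time shows that \<open>count\<close> is the path count. Summing over the
  vertices of type \<open>end(P)\<close> partitions the paths by their last vertex.\<close>

lemma is_path_iff_successively:
  "is_path V E xs \<longleftrightarrow> xs \<noteq> [] \<and> set xs \<subseteq> V \<and> successively (\<lambda>a b. (a, b) \<in> E) xs"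
  by (simp add: is_path_def successively_conv_nth)

lemma is_path_singleton [simp]: "is_path V E [e] \<longleftrightarrow> e \<in> V"
  by (simp add: is_path_def)

lemma is_path_snoc:
  "xs \<noteq> [] \<Longrightarrow> is_path V E (xs @ [e]) \<longleftrightarrow> is_path V E xs \<and> e \<in> V \<and> (last xs, e) \<in> E"
  by (auto simp: is_path_iff_successively successively_append_iff)

lemma is_path_sorted_wrt:
  fixes f :: "'a \<Rightarrow> 'b::linorder"
  assumes "is_path V E xs" and "\<And>a b. (a, b) \<in> E \<Longrightarrow> f a < f b"
  shows "sorted_wrt (\<lambda>a b. f a < f b) xs"
proof -
  have "successively (\<lambda>a b. f a < f b) xs"
    using assms by (auto simp: is_path_iff_successively elim: successively_mono)
  moreover have "transp (\<lambda>a b. f a < (f b :: 'b))"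
    by (auto intro: transpI)
  ultimately show ?thesis
    by (simp add: successively_conv_sorted_wrt)
qed

lemma is_path_distinct:
  fixes f :: "'a \<Rightarrow> 'b::linorder"
  assumes "is_path V E xs" and "\<And>a b. (a, b) \<in> E \<Longrightarrow> f a < f b"
  shows "distinct xs"
proof -
  have "sorted_wrt (<) (map f xs)"
    using is_path_sorted_wrt[OF assms] by (simp add: sorted_wrt_map)
  then show ?thesis
    by (simp add: strict_sorted_iff distinct_map)
qed

definition paths_from_to :: "'a set \<Rightarrow> ('a \<times> 'a) set \<Rightarrow> ('a \<Rightarrow> bool) \<Rightarrow> 'a \<Rightarrow> 'a list set" where
  "paths_from_to V E S e = {xs. is_path V E xs \<and> S (hd xs) \<and> last xs = e}"

lemma finite_paths_from_to:
  fixes f :: "'a \<Rightarrow> 'b::linorder"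
  assumes "finite V" and "\<And>a b. (a, b) \<in> E \<Longrightarrow> f a < f b"
  shows "finite (paths_from_to V E S e)"
proof (rule finite_subset)
  show "paths_from_to V E S e \<subseteq> {xs. set xs \<subseteq> V \<and> distinct xs}"
    using is_path_distinct[where f = f] assms(2) by (auto simp: paths_from_to_def is_path_def)
  show "finite {xs. set xs \<subseteq> V \<and> distinct xs}"
    using assms(1) by (rule finite_subset_distinct)
qed

lemma paths_from_to_unfold:
  assumes "e \<in> V"
  shows "paths_from_to V E S e = (if S e then {[e]} else {})
           \<union> (\<Union>p \<in> {p \<in> V. (p, e) \<in> E}. (\<lambda>xs. xs @ [e]) ` paths_from_to V E S p)"
    (is "?lhs = ?single \<union> ?extended")
proof (intro equalityI subsetI)
  fix xs assume "xs \<in> ?lhs"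
  then have xs: "is_path V E xs" "S (hd xs)" "last xs = e"
    by (auto simp: paths_from_to_def)
  then obtain ys where ys: "xs = ys @ [e]"
    by (metis append_butlast_last_id is_path_def)
  show "xs \<in> ?single \<union> ?extended"
  proof (cases "ys = []")
    case True
    then show ?thesis using xs ys by auto
  next
    case False
    then have "is_path V E ys" "(last ys, e) \<in> E" "last ys \<in> V" "S (hd ys)"
      using xs ys is_path_snoc[of ys V E e] by (auto simp: is_path_def)
    then show ?thesis using ys by (auto simp: paths_from_to_def)
  qed
next
  fix xs assume "xs \<in> ?single \<union> ?extended"
  then show "xs \<in> ?lhs"
  proof
    assume "xs \<in> ?single"
    then show ?thesis using assms by (auto simp: paths_from_to_def split: if_splits)
  next
    assume "xs \<in> ?extended"
    then obtain p ys where "p \<in> V" "(p, e) \<in> E" "ys \<in> paths_from_to V E S p" "xs = ys @ [e]"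
      by auto
    moreover from this have "ys \<noteq> []" by (auto simp: paths_from_to_def is_path_def)
    ultimately show ?thesis using assms is_path_snoc[of ys V E e] by (auto simp: paths_from_to_def)
  qed
qed

lemma card_paths_from_to:
  fixes f :: "'a \<Rightarrow> 'b::linorder"
  assumes "finite V" and "\<And>a b. (a, b) \<in> E \<Longrightarrow> f a < f b" and "e \<in> V"
  shows "card (paths_from_to V E S e) = (if S e then 1 else 0)
           + (\<Sum>p \<in> {p \<in> V. (p, e) \<in> E}. card (paths_from_to V E S p))"
proof -
  let ?preds = "{p \<in> V. (p, e) \<in> E}"
  let ?extended = "\<Union>p \<in> ?preds. (\<lambda>xs. xs @ [e]) ` paths_from_to V E S p"
  have fin: "finite (paths_from_to V E S p)" for p
    using finite_paths_from_to[OF assms(1,2)] .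
  have "card ?extended = (\<Sum>p \<in> ?preds. card ((\<lambda>xs. xs @ [e]) ` paths_from_to V E S p))"
    using assms(1) fin by (intro card_UN_disjoint) (auto simp: paths_from_to_def)
  also have "\<dots> = (\<Sum>p \<in> ?preds. card (paths_from_to V E S p))"
    by (intro sum.cong refl card_image) (auto simp: inj_on_def)
  finally have card_extended: "card ?extended = \<dots>" .
  have "[e] \<notin> ?extended"
    by (auto simp: paths_from_to_def is_path_def)
  moreover have "finite ?extended"
    using assms(1) fin by auto
  ultimately show ?thesis
    using paths_from_to_unfold[OF assms(3), of E S] card_extended by auto
qed

lemma finite_potential_induct:
  fixes f :: "'a \<Rightarrow> 'b::linorder"
  assumes "finite V" and "x \<in> V"
    and step: "\<And>x. x \<in> V \<Longrightarrow> (\<And>y. y \<in> V \<Longrightarrow> f y < f x \<Longrightarrow> Q y) \<Longrightarrow> Q x"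
  shows "Q x"
proof -
  have "x \<in> V \<longrightarrow> Q x"
  proof (induction x rule: measure_induct_rule[where f = "\<lambda>x. card {y \<in> V. f y < f x}"])
    case (less x)
    have "Q y" if "y \<in> V" "f y < f x" for y
    proof -
      have "{z \<in> V. f z < f y} \<subset> {z \<in> V. f z < f x}"
        using that by auto
      then have "card {z \<in> V. f z < f y} < card {z \<in> V. f z < f x}"
        using assms(1) by (simp add: psubset_card_mono)
      then show ?thesis using less that by blast
    qed
    then show ?case using step by blast
  qed
  then show ?thesis using assms(2) by blast
qed

lemma count_eq_card_paths_from_to:
  fixes f :: "'a \<Rightarrow> 'b::linorder" and count :: "'a \<Rightarrow> nat"
  assumes "finite V" and "\<And>a b. (a, b) \<in> E \<Longrightarrow> f a < f b"
    and count: "\<forall>e \<in> V. count e = (if S e then 1 else 0) + (\<Sum>p \<in> {p \<in> V. (p, e) \<in> E}. count p)"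
    and "e \<in> V"
  shows "count e = card (paths_from_to V E S e)"
  using assms(1,4)
proof (rule finite_potential_induct[where f = f])
  fix e assume e: "e \<in> V"
    and IH: "\<And>p. p \<in> V \<Longrightarrow> f p < f e \<Longrightarrow> count p = card (paths_from_to V E S p)"
  have "count e = (if S e then 1 else 0) + (\<Sum>p \<in> {p \<in> V. (p, e) \<in> E}. count p)"
    using count e by blast
  also have "\<dots> = (if S e then 1 else 0) + (\<Sum>p \<in> {p \<in> V. (p, e) \<in> E}. card (paths_from_to V E S p))"
    using IH assms(2) by (intro arg_cong2[where f = "(+)"] sum.cong) auto
  also have "\<dots> = card (paths_from_to V E S e)"
    by (rule card_paths_from_to[OF assms(1,2) e, symmetric])
  finally show "count e = card (paths_from_to V E S e)" .
qed

lemma card_paths_eq_sum_card_paths_from_to: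
  fixes f :: "'a \<Rightarrow> 'b::linorder"
  assumes "finite V" and "\<And>a b. (a, b) \<in> E \<Longrightarrow> f a < f b"
  shows "card {xs. is_path V E xs \<and> S (hd xs) \<and> T (last xs)}
           = (\<Sum>e \<in> {e \<in> V. T e}. card (paths_from_to V E S e))"
proof -
  have "{xs. is_path V E xs \<and> S (hd xs) \<and> T (last xs)} = (\<Union>e \<in> {e \<in> V. T e}. paths_from_to V E S e)"
    by (auto simp: paths_from_to_def is_path_def intro: subsetD[OF _ last_in_set])
  then show ?thesis
    using assms finite_paths_from_to[OF assms]
    by (simp add: card_UN_disjoint paths_from_to_def disjoint_iff)
qed

lemma strictly_timed_append:
  "strictly_timed time (xs @ ys) \<longleftrightarrow> strictly_timed time xs \<and> strictly_timed time ys
     \<and> (xs = [] \<or> ys = [] \<or> time (last xs) < time (hd ys))"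
proof -
  have "transp (\<lambda>a b. time a < (time b :: rat))"
    by (auto intro: transpI)
  then show ?thesis
    using successively_append_iff[of "\<lambda>a b. time a < time b" xs ys]
    by (simp add: strictly_timed_def successively_conv_sorted_wrt)
qed

lemma is_match_trend:
  "is_match etype time I P xs \<Longrightarrow> xs \<noteq> [] \<and> set xs \<subseteq> I \<and> strictly_timed time xs"
proof (induction rule: is_match.induct)
  case (m_type e E)
  then show ?case by (simp add: strictly_timed_def)
qed (auto simp: strictly_timed_append)

lemma greta_V_subset: "greta_V etype time I P \<subseteq> I"
  using is_match_trend by (fastforce simp: greta_V_def matches_def)

lemma greta_E_time_less:
  assumes "(a, b) \<in> greta_E etype time I P"
  shows "time a < time b"
proof -
  obtain tr i where "is_match etype time I P tr" "Suc i < length tr" "tr ! i = a" "tr ! Suc i = b"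
    using assms unfolding greta_E_def matches_def by blast
  then show ?thesis
    using is_match_trend sorted_wrt_nth_less[of _ tr i "Suc i"] by (fastforce simp: strictly_timed_def)
qed

theorem theorem3:
  fixes etype :: "'e \<Rightarrow> 't" and time :: "'e \<Rightarrow> rat" and I :: "'e set" and P :: "'t pat"
    and count :: "'e \<Rightarrow> nat"
  assumes wfP: "wf_pat P"
    and finI: "finite I"
    and nonneg: "\<forall>e \<in> I. time e \<ge> 0"
    and count_def: "\<forall>e \<in> greta_V etype time I P.
        count e = (if etype e = pstart P then 1 else 0)
          + (\<Sum>p \<in> {p \<in> greta_V etype time I P. (p, e) \<in> greta_E etype time I P}. count p)"
  shows "(\<forall>e \<in> greta_V etype time I P.
           count e = card {xs. is_path (greta_V etype time I P) (greta_E etype time I P) xs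
                               \<and> etype (hd xs) = pstart P \<and> last xs = e})
       \<and> (\<Sum>e \<in> {e \<in> greta_V etype time I P. etype e = pend P}. count e)
           = card {xs. is_path (greta_V etype time I P) (greta_E etype time I P) xs
                       \<and> etype (hd xs) = pstart P \<and> etype (last xs) = pend P}"
proof -
  let ?V = "greta_V etype time I P" and ?E = "greta_E etype time I P"
  let ?S = "\<lambda>x. etype x = pstart P"
  have finV: "finite ?V"
    using finI greta_V_subset by (rule finite_subset[rotated])
  note forward = greta_E_time_less[of _ _ etype time I P]
  have count_eq: "count e = card (paths_from_to ?V ?E ?S e)" if "e \<in> ?V" for e
    using count_eq_card_paths_from_to[OF finV forward count_def that] .
  have "(\<Sum>e \<in> {e \<in> ?V. etype e = pend P}. count e)
      = (\<Sum>e \<in> {e \<in> ?V. etype e = pend P}. card (paths_from_to ?V ?E ?S e))"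
    using count_eq by simp
  also have "\<dots> = card {xs. is_path ?V ?E xs \<and> ?S (hd xs) \<and> etype (last xs) = pend P}"
    by (rule card_paths_eq_sum_card_paths_from_to[OF finV forward, symmetric])
  finally show ?thesis
    using count_eq by (simp add: paths_from_to_def)
qed

end
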